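(* Let $\mathcal{C}=\langle E,X\rangle$ be a stable configuration structure and $y^\dagger\in X$ a finite configuration. For every finite configuration $x\in X$, $\lfloor x\rfloor_{\mathcal{C}}\odot\mathsf{E}(\mathcal{C}[y^\dagger])$ is a polarized event structure.
   Context: A configuration structure is $\mathcal{C}=\langle E,X\rangle$ with $E$ countable and $X\subseteq\mathcal{P}(E)$. It is stable if: $\emptyset\in X$; for all nonempty $x\in X$ there is $a\in x$ with $x\setminus\{a\}\in X$; for all $x,y,z\in X$, $x\cup y\subseteq z$ implies $x\cup y\in X$; $X$ is closed under binary intersection; and for all $x,y,z\in X$, if each of $x\cup y$, $y\cup z$, $x\cup z$ is contained in some element of $X$ then $x\cup y\cup z\in X$. $u\frown_{\mathcal{C}}v$ if $\{u,v\}$ has a least upper bound in $(X,\subseteq)$; $Y\subseteq X$ is pairwise consistent if $Y\neq\emptyset$ and any two distinct elements have a least upper bound; $p\in X$ is a complete prime if for every pairwise consistent $Y$ whose least upper bound $\bigsqcup Y$ exists with $p\subseteq\bigsqcup Y$, some $y\in Y$ satisfies $p\subseteq y$; $\mathsf{Pr}(\mathcal{C})$ is the set of complete primes; $\lfloor x\rfloor_{\mathcal{C}}:=\{p\in\mathsf{Pr}(\mathcal{C})\mid p\subseteq x\}$. A prime event structure is $(E,<,\#)$ with $<$ a partial order, $\#$ irreflexive symmetric, $e\#e'<e''\Rightarrow e\#e''$; configurations are conflict-free $<$-downward-closed subsets. $\mathsf{E}(\mathcal{C}):=(\mathsf{Pr}(\mathcal{C}),<,\#)$ with $p<q$ iff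 $p\subseteq q$, $p\#q$ iff not $p\frown_{\mathcal{C}}q$; $\mathsf{E}(\mathcal{C}[y^\dagger]):=\mathsf{E}(\mathcal{C})[\pi_{y^\dagger}]$ with $\pi_{y^\dagger}(p)=-1$ if $p\subseteq y^\dagger$ and $1$ otherwise. A polarized event structure $\mathbb{E}[\pi]$ is a prime event structure $\mathbb{E}=(E,<,\#)$ with $\pi:E\to\{-1,1\}$ such that $\{e\mid\pi(e)<0\}$ is a configuration of $\mathbb{E}$. Switch of a prime event structure $\mathbb{E}=(E,<,\#)$ on a finite configuration $X'$: $X'\odot\mathbb{E}:=(E,<',\#')$ with $a<'b$ iff ($a<b$ and $\{a,b\}\cap X'=\emptyset$) or ($b<a$ and $\{a,b\}\subseteq X'$) or ($a\#b$ and $a\in X'$); $a\#'b$ iff ($a\#b$ and $\{a,b\}\cap X'=\emptyset$) or ($a<b$, $a\in X'$, $b\notin X'$). Switch of a polarized structure: $X'\odot\mathbb{E}[\pi]:=(X'\odot\mathbb{E})[\pi']$ with $\pi'(e)=-\pi(e)$ if $e\in X'$ and $\pi'(e)=\pi(e)$ otherwise. *)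

theory Defs
  imports Main "HOL-Library.Countable_Set"
begin

definition config_structure :: "'a set \<Rightarrow> 'a set set \<Rightarrow> bool" where
  "config_structure E X \<longleftrightarrow> countable E \<and> X \<subseteq> Pow E"

definition stable :: "'a set \<Rightarrow> 'a set set \<Rightarrow> bool" where
  "stable E X \<longleftrightarrow> config_structure E X \<and>
     {} \<in> X \<and>
     (\<forall>x\<in>X. x \<noteq> {} \<longrightarrow> (\<exists>a\<in>x. x - {a} \<in> X)) \<and>
     (\<forall>x\<in>X. \<forall>y\<in>X. \<forall>z\<in>X. x \<union> y \<subseteq> z \<longrightarrow> x \<union> y \<in> X) \<and>
     (\<forall>x\<in>X. \<forall>y\<in>X. x \<inter> y \<in> X) \<and>
     (\<forall>x\<in>X. \<forall>y\<in>X. \<forall>z\<in>X.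
        (\<exists>w\<in>X. x \<union> y \<subseteq> w) \<and> (\<exists>w\<in>X. y \<union> z \<subseteq> w) \<and> (\<exists>w\<in>X. x \<union> z \<subseteq> w)
        \<longrightarrow> x \<union> y \<union> z \<in> X)"

definition lub_in :: "'a set set \<Rightarrow> 'a set set \<Rightarrow> 'a set \<Rightarrow> bool" where
  "lub_in X Y z \<longleftrightarrow> z \<in> X \<and> (\<forall>y\<in>Y. y \<subseteq> z) \<and>
     (\<forall>w\<in>X. (\<forall>y\<in>Y. y \<subseteq> w) \<longrightarrow> z \<subseteq> w)"

definition has_lub :: "'a set set \<Rightarrow> 'a set set \<Rightarrow> bool" where
  "has_lub X Y \<longleftrightarrow> (\<exists>z. lub_in X Y z)"

definition consistent :: "'a set set \<Rightarrow> 'a set \<Rightarrow> 'a set \<Rightarrow> bool" where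
  "consistent X u v \<longleftrightarrow> has_lub X {u, v}"

definition pairwise_consistent :: "'a set set \<Rightarrow> 'a set set \<Rightarrow> bool" where
  "pairwise_consistent X Y \<longleftrightarrow> Y \<subseteq> X \<and> Y \<noteq> {} \<and>
     (\<forall>u\<in>Y. \<forall>v\<in>Y. u \<noteq> v \<longrightarrow> has_lub X {u, v})"

definition complete_prime :: "'a set set \<Rightarrow> 'a set \<Rightarrow> bool" where
  "complete_prime X p \<longleftrightarrow> p \<in> X \<and>
     (\<forall>Y z. pairwise_consistent X Y \<longrightarrow> lub_in X Y z \<longrightarrow> p \<subseteq> z \<longrightarrow> (\<exists>y\<in>Y. p \<subseteq> y))"

definition primes :: "'a set set \<Rightarrow> 'a set set" where
  "primes X = {p. complete_prime X p}"

definition prime_floor :: "'a set set \<Rightarrow> 'a set \<Rightarrow> 'a set set" where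
  "prime_floor X x = {p \<in> primes X. p \<subseteq> x}"

text \<open>A prime event structure: events, strict causality, conflict.
  Relations are required to relate only events.\<close>
type_synonym 'e pes = "'e set \<times> ('e \<Rightarrow> 'e \<Rightarrow> bool) \<times> ('e \<Rightarrow> 'e \<Rightarrow> bool)"

definition is_pes :: "'e pes \<Rightarrow> bool" where
  "is_pes P \<longleftrightarrow> (case P of (E, lt, cf) \<Rightarrow>
     (\<forall>a b. lt a b \<longrightarrow> a \<in> E \<and> b \<in> E) \<and>
     (\<forall>a b. cf a b \<longrightarrow> a \<in> E \<and> b \<in> E) \<and>
     (\<forall>a\<in>E. \<not> lt a a) \<and>
     (\<forall>a\<in>E. \<forall>b\<in>E. \<forall>c\<in>E. lt a b \<longrightarrow> lt b c \<longrightarrow> lt a c) \<and>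
     (\<forall>a\<in>E. \<not> cf a a) \<and>
     (\<forall>a\<in>E. \<forall>b\<in>E. cf a b \<longrightarrow> cf b a) \<and>
     (\<forall>a\<in>E. \<forall>b\<in>E. \<forall>c\<in>E. cf a b \<longrightarrow> lt b c \<longrightarrow> cf a c))"

definition pes_config :: "'e pes \<Rightarrow> 'e set \<Rightarrow> bool" where
  "pes_config P x \<longleftrightarrow> (case P of (E, lt, cf) \<Rightarrow>
     x \<subseteq> E \<and> (\<forall>a\<in>x. \<forall>b\<in>x. \<not> cf a b) \<and>
     (\<forall>b\<in>x. \<forall>a\<in>E. lt a b \<longrightarrow> a \<in> x))"

type_synonym 'e ppes = "'e pes \<times> ('e \<Rightarrow> int)"

definition is_polarized :: "'e ppes \<Rightarrow> bool" where
  "is_polarized Q \<longleftrightarrow> (case Q of (P, pol) \<Rightarrow>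
     is_pes P \<and> (\<forall>e\<in>fst P. pol e \<in> {-1, 1}) \<and>
     pes_config P {e \<in> fst P. pol e < 0})"

definition ES_of :: "'a set set \<Rightarrow> 'a set pes" where
  "ES_of X = (primes X,
     (\<lambda>p q. p \<in> primes X \<and> q \<in> primes X \<and> p \<subset> q),
     (\<lambda>p q. p \<in> primes X \<and> q \<in> primes X \<and> \<not> consistent X p q))"

definition pol_of :: "'a set \<Rightarrow> 'a set \<Rightarrow> int" where
  "pol_of y p = (if p \<subseteq> y then -1 else 1)"

text \<open>E(C[y]) = E(C)[pi_y]\<close>
definition ES_pol :: "'a set set \<Rightarrow> 'a set \<Rightarrow> 'a set ppes" where
  "ES_pol X y = (ES_of X, pol_of y)"

text \<open>The new conflict is taken symmetrically closed.\<close>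
definition switch :: "'e set \<Rightarrow> 'e pes \<Rightarrow> 'e pes" where
  "switch X' P = (case P of (E, lt, cf) \<Rightarrow>
     (E,
      (\<lambda>a b. (lt a b \<and> a \<notin> X' \<and> b \<notin> X') \<or> (lt b a \<and> a \<in> X' \<and> b \<in> X') \<or> (cf a b \<and> a \<in> X')),
      (\<lambda>a b. (cf a b \<and> a \<notin> X' \<and> b \<notin> X') \<or>
             (lt a b \<and> a \<in> X' \<and> b \<notin> X') \<or> (lt b a \<and> b \<in> X' \<and> a \<notin> X'))))"

definition switch_pol :: "'e set \<Rightarrow> 'e ppes \<Rightarrow> 'e ppes" where
  "switch_pol X' Q = (case Q of (P, pol) \<Rightarrow>
     (switch X' P, (\<lambda>e. if e \<in> X' then - pol e else pol e)))"

end

theory Submission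
  imports Defs
begin

text \<open>In a stable configuration structure two configurations lying below a common configuration
  have their union as least upper bound. Hence inconsistency of complete primes is inherited
  upwards, so \<open>E(C)\<close> is a prime event structure, and all complete primes below one configuration
  are pairwise consistent, so every \<open>\<lfloor>x\<rfloor>\<close> is a configuration of \<open>E(C)\<close>; the negative events of
  \<open>E(C[y\<dagger>])\<close> form the configuration \<open>\<lfloor>y\<dagger>\<rfloor>\<close>.
  Switching a prime event structure along a conflict-free set \<open>L\<close> reverses causality inside \<open>L\<close>
  and exchanges causality and conflict between \<open>L\<close> and its complement; the result is again a prime
  event structure. After the switch the negative events are the symmetric difference of \<open>L\<close> and
  the old negative configuration, which is a configuration of the switched structure.\<close>

lemma consistent_commute: "consistent X p q \<longleftrightarrow> consistent X q p"
  unfolding consistent_def by (simp add: insert_commute)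

lemma consistent_refl: "p \<in> X \<Longrightarrow> consistent X p p"
  unfolding consistent_def has_lub_def lub_in_def by auto

lemma stable_consistent_if_union_subset:
  assumes "stable E X" "p \<in> X" "q \<in> X" "z \<in> X" "p \<union> q \<subseteq> z"
  shows "consistent X p q"
proof -
  have "\<forall>x\<in>X. \<forall>y\<in>X. \<forall>z\<in>X. x \<union> y \<subseteq> z \<longrightarrow> x \<union> y \<in> X"
    using assms(1) unfolding stable_def by (elim conjE)
  then have "p \<union> q \<in> X" using assms(2-5) by blast
  then have "lub_in X {p, q} (p \<union> q)" unfolding lub_in_def by auto
  then show ?thesis unfolding consistent_def has_lub_def by blast
qed

lemma stable_consistent_antimono:
  assumes "stable E X" "consistent X p r" "q \<subseteq> r" "p \<in> X" "q \<in> X"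
  shows "consistent X p q"
proof -
  obtain z where "lub_in X {p, r} z"
    using assms(2) unfolding consistent_def has_lub_def by blast
  then have "z \<in> X" "p \<union> q \<subseteq> z" using assms(3) unfolding lub_in_def by auto
  then show ?thesis using stable_consistent_if_union_subset assms(1,4,5) by blast
qed

lemma primes_subset: "primes X \<subseteq> X"
  unfolding primes_def complete_prime_def by auto

lemma is_pes_iff:
  "is_pes (E, lt, cf) \<longleftrightarrow>
     (\<forall>a b. lt a b \<longrightarrow> a \<in> E \<and> b \<in> E) \<and> (\<forall>a b. cf a b \<longrightarrow> a \<in> E \<and> b \<in> E) \<and>
     (\<forall>a. \<not> lt a a) \<and> (\<forall>a b c. lt a b \<longrightarrow> lt b c \<longrightarrow> lt a c) \<and>
     (\<forall>a. \<not> cf a a) \<and> (\<forall>a b. cf a b \<longrightarrow> cf b a) \<and>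
     (\<forall>a b c. cf a b \<longrightarrow> lt b c \<longrightarrow> cf a c)"
  unfolding is_pes_def by blast

lemma stable_is_pes_ES_of:
  assumes "stable E X"
  shows "is_pes (ES_of X)"
proof -
  have "\<not> consistent X p r" if "\<not> consistent X p q" "q \<subset> r" "p \<in> primes X" "q \<in> primes X"
    for p q r
    using that stable_consistent_antimono[OF assms] primes_subset by blast
  then show ?thesis
    unfolding ES_of_def is_pes_iff
    using primes_subset[of X] consistent_refl[of _ X] consistent_commute[of X]
    by (auto intro: psubset_trans)
qed

lemma stable_pes_config_prime_floor:
  assumes "stable E X" "x \<in> X"
  shows "pes_config (ES_of X) (prime_floor X x)"
proof -
  have "consistent X p q" if "p \<in> prime_floor X x" "q \<in> prime_floor X x" for p q
    using that primes_subset[of X] stable_consistent_if_union_subset[OF assms(1) _ _ assms(2)]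
    unfolding prime_floor_def by blast
  then show ?thesis
    unfolding ES_of_def pes_config_def prod.case by (auto simp: prime_floor_def)
qed

lemma is_pes_switch:
  assumes pes: "is_pes (E, lt, cf)" and L_conflict_free: "\<forall>a\<in>L. \<forall>b\<in>L. \<not> cf a b"
  shows "is_pes (switch L (E, lt, cf))"
proof -
  obtain lt' cf' where sw: "switch L (E, lt, cf) = (E, lt', cf')"
    and lt': "\<And>a b. lt' a b \<longleftrightarrow>
      (lt a b \<and> a \<notin> L \<and> b \<notin> L) \<or> (lt b a \<and> a \<in> L \<and> b \<in> L) \<or> (cf a b \<and> a \<in> L)"
    and cf': "\<And>a b. cf' a b \<longleftrightarrow>
      (cf a b \<and> a \<notin> L \<and> b \<notin> L) \<or> (lt a b \<and> a \<in> L \<and> b \<notin> L) \<or> (lt b a \<and> b \<in> L \<and> a \<notin> L)"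
    unfolding switch_def by auto
  from pes have in_E: "\<And>a b. lt a b \<or> cf a b \<Longrightarrow> a \<in> E \<and> b \<in> E"
    and lt_irrefl: "\<And>a. \<not> lt a a" and lt_trans: "\<And>a b c. lt a b \<Longrightarrow> lt b c \<Longrightarrow> lt a c"
    and cf_irrefl: "\<And>a. \<not> cf a a" and cf_sym: "\<And>a b. cf a b \<Longrightarrow> cf b a"
    and cf_inherit: "\<And>a b c. cf a b \<Longrightarrow> lt b c \<Longrightarrow> cf a c"
    unfolding is_pes_iff by blast+
  text \<open>Both proofs split on membership of \<open>a\<close>, \<open>b\<close>, \<open>c\<close> in \<open>L\<close>; conflict-freeness of \<open>L\<close>
    ensures that \<open>lt'\<close> between two events of \<open>L\<close> is the reversed \<open>lt\<close>.\<close>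
  have lt'_trans: "lt' a c" if "lt' a b" "lt' b c" for a b c
    using that L_conflict_free lt_trans cf_sym cf_inherit unfolding lt' by metis
  have cf'_inherit: "cf' a c" if "cf' a b" "lt' b c" for a b c
    using that L_conflict_free lt_trans cf_sym cf_inherit unfolding lt' cf' by metis
  show ?thesis
    unfolding sw is_pes_iff using lt'_trans cf'_inherit in_E lt_irrefl cf_irrefl cf_sym
    unfolding lt' cf' by blast
qed

lemma pes_config_switch_sym_diff:
  assumes pes: "is_pes (E, lt, cf)"
    and L: "L \<subseteq> E" "\<forall>a\<in>L. \<forall>b\<in>L. \<not> cf a b"
    and Y: "pes_config (E, lt, cf) Y"
  shows "pes_config (switch L (E, lt, cf)) (sym_diff L Y)"
proof -
  from pes have in_E: "\<And>a b. lt a b \<Longrightarrow> a \<in> E \<and> b \<in> E"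
    unfolding is_pes_iff by blast
  from Y have "Y \<subseteq> E" and "\<forall>a\<in>Y. \<forall>b\<in>Y. \<not> cf a b"
    and "\<And>a b. b \<in> Y \<Longrightarrow> lt a b \<Longrightarrow> a \<in> Y"
    unfolding pes_config_def using in_E by auto
  with L show ?thesis
    unfolding switch_def pes_config_def prod.case by blast
qed

lemma is_polarized_switch_pol:
  assumes pes: "is_pes (E, lt, cf)"
    and L: "L \<subseteq> E" "\<forall>a\<in>L. \<forall>b\<in>L. \<not> cf a b"
    and Y: "pes_config (E, lt, cf) Y"
    and pol: "\<forall>e\<in>E. pol e = (if e \<in> Y then -1 else 1)"
  shows "is_polarized (switch_pol L ((E, lt, cf), pol))"
proof -
  have "Y \<subseteq> E" using Y unfolding pes_config_def by simp
  with L pol have "{e \<in> E. (if e \<in> L then - pol e else pol e) < 0} = sym_diff L Y"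
    by auto
  with pol is_pes_switch[OF pes L(2)] pes_config_switch_sym_diff[OF pes L Y]
  show ?thesis
    unfolding switch_pol_def is_polarized_def by (simp add: switch_def)
qed

theorem mainTheorem14:
  fixes E :: "'a set" and X :: "'a set set" and y x :: "'a set"
  assumes "stable E X"
    and "y \<in> X" and "finite y"
    and "x \<in> X" and "finite x"
  shows "is_polarized (switch_pol (prime_floor X x) (ES_pol X y))"
proof -
  obtain lt cf where ES: "ES_of X = (primes X, lt, cf)"
    unfolding ES_of_def by simp
  have "pes_config (ES_of X) (prime_floor X x)"
    using stable_pes_config_prime_floor assms(1,4) .
  then have L: "prime_floor X x \<subseteq> primes X" "\<forall>a\<in>prime_floor X x. \<forall>b\<in>prime_floor X x. \<not> cf a b"
    unfolding ES pes_config_def by auto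
  have pol: "\<forall>p\<in>primes X. pol_of y p = (if p \<in> prime_floor X y then -1 else 1)"
    by (simp add: pol_of_def prime_floor_def)
  show ?thesis
    using is_polarized_switch_pol[OF _ L _ pol] stable_is_pes_ES_of[OF assms(1)]
      stable_pes_config_prime_floor[OF assms(1,2)]
    unfolding ES_pol_def ES by blast
qed

end
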